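(* Let $G$ be a finite group and let $p,q$ be distinct primes dividing $|G|$. Let $m,n$ be positive integers and suppose that $|G| = p^i q^n$ for some integer $i$ with $1 \le i \le m$. If $p \nmid q^n - 1$ and $q \nmid p^j - 1$ for every $j$ with $1 \le j \le m$, then $G$ has an abelian subgroup of order $pq$. *)

theory Defs
  imports "HOL-Algebra.Algebra"
begin

end

theory Submission
  imports Defs "HOL-Number_Theory.Cong"
begin

(* The number of Sylow q-subgroups divides p^i and is congruent to 1 mod q; as q does not divide
   p^j - 1 for 1 <= j <= i, the Sylow q-subgroup Q is normal. A subgroup P of order p acts on Q by
   conjugation, and the number of fixed points is congruent to |Q| = q^n, hence not to 1, mod p.
   So some y /= 1 in Q commutes with P. Suitable powers of a nontrivial x in P and of y commute and
   have orders p and q, so their product generates a cyclic subgroup of order pq. *)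

section \<open>Fixed points of actions of groups of prime-power order\<close>

lemma group_actionI:
  assumes "group H"
    and closed: "\<And>g x. g \<in> carrier H \<Longrightarrow> x \<in> E \<Longrightarrow> f g x \<in> E"
    and one: "\<And>x. x \<in> E \<Longrightarrow> f \<one>\<^bsub>H\<^esub> x = x"
    and mult: "\<And>g h x. \<lbrakk>g \<in> carrier H; h \<in> carrier H; x \<in> E\<rbrakk> \<Longrightarrow> f (g \<otimes>\<^bsub>H\<^esub> h) x = f g (f h x)"
  shows "group_action H E (\<lambda>g. restrict (f g) E)"
proof -
  interpret H: group H by fact
  have bij: "restrict (f g) E \<in> Bij E" if g: "g \<in> carrier H" for g
  proof -
    have "bij_betw (f g) E E"
    proof (rule bij_betw_byWitness[where f' = "f (inv\<^bsub>H\<^esub> g)"])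
      show "\<forall>x\<in>E. f (inv\<^bsub>H\<^esub> g) (f g x) = x" "\<forall>x\<in>E. f g (f (inv\<^bsub>H\<^esub> g) x) = x"
        using g by (simp_all flip: mult add: one)
    qed (use closed g in auto)
    then show ?thesis
      by (simp add: Bij_def bij_betw_restrict_eq)
  qed
  have "(\<lambda>g. restrict (f g) E) \<in> hom H (BijGroup E)"
  proof (rule homI)
    show "restrict (f g) E \<in> carrier (BijGroup E)" if "g \<in> carrier H" for g
      using bij[OF that] by (simp add: BijGroup_def)
    show "restrict (f (g \<otimes>\<^bsub>H\<^esub> h)) E = restrict (f g) E \<otimes>\<^bsub>BijGroup E\<^esub> restrict (f h) E"
      if "g \<in> carrier H" "h \<in> carrier H" for g h
      using bij that mult closed by (auto simp: BijGroup_def compose_def fun_eq_iff)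
  qed
  then show ?thesis
    by (simp add: group_action_def group_hom_def group_hom_axioms_def group_BijGroup H.is_group)
qed

lemma (in group_action) card_fixed_points_cong:
  assumes "finite E" and "Factorial_Ring.prime (r::nat)" and "order G = r ^ k"
  shows "[card {x \<in> E. \<forall>g \<in> carrier G. \<phi> g x = x} = card E] (mod r)"
proof -
  interpret G: group G
    using group_hom group_hom.axioms(1) by blast
  let ?F = "{x \<in> E. \<forall>g \<in> carrier G. \<phi> g x = x}"
  let ?O = "orbits G E \<phi>"
  have orbit_card_cong: "[card B = (if card B = 1 then 1 else 0)] (mod r)" if orb: "B \<in> ?O" for B
  proof -
    obtain x where "x \<in> E" "B = orbit G \<phi> x"
      using orb unfolding orbits_def by blast
    then have "card B dvd r ^ k"
      using orbit_stabilizer_theorem assms(3) by (metis dvd_triv_left)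
    then obtain j where "card B = r ^ j"
      using divides_primepow_nat[OF assms(2)] by blast
    then show ?thesis
      by (cases j) (auto simp: cong_def)
  qed
  have "orbit G \<phi> x = {x} \<longleftrightarrow> x \<in> ?F" if "x \<in> E" for x
  proof
    assume "orbit G \<phi> x = {x}"
    then show "x \<in> ?F"
      using that unfolding orbit_def by blast
  next
    assume "x \<in> ?F"
    then show "orbit G \<phi> x = {x}"
      using G.one_closed unfolding orbit_def by (auto intro!: exI[of _ \<one>])
  qed
  moreover have "card (orbit G \<phi> x) = 1 \<longleftrightarrow> orbit G \<phi> x = {x}" if "x \<in> E" for x
    using orbit_refl[OF that] by (auto simp: card_1_singleton_iff)
  ultimately have singleton_orbits: "{B \<in> ?O. card B = 1} = (\<lambda>x. {x}) ` ?F"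
    unfolding orbits_def by auto
  have finite_orbits: "finite ?O"
    using assms(1) by (simp add: orbits_def)
  have "card E = (\<Sum>B \<in> ?O. card B)"
    using disjoint_sum[OF assms(1), of "\<lambda>_. 1 :: nat"] by simp
  also have "[\<dots> = (\<Sum>B \<in> ?O. if card B = 1 then 1 else 0)] (mod r)"
    by (rule cong_sum) (rule orbit_card_cong)
  also have "(\<Sum>B \<in> ?O. if card B = 1 then 1 else 0) = card {B \<in> ?O. card B = 1}"
    using finite_orbits sum.inter_filter[of ?O "\<lambda>_. 1 :: nat" "\<lambda>B. card B = 1"] by simp
  also have "\<dots> = card ?F"
    unfolding singleton_orbits by (rule card_image) (simp add: inj_on_def)
  finally show ?thesis
    by (rule cong_sym)
qed

lemma (in group) card_fixed_points_cong_subgroup: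
  assumes "subgroup P G" and "card P = r ^ k" and "Factorial_Ring.prime (r::nat)" and "finite E"
    and closed: "\<And>g x. g \<in> P \<Longrightarrow> x \<in> E \<Longrightarrow> f g x \<in> E"
    and one: "\<And>x. x \<in> E \<Longrightarrow> f \<one> x = x"
    and mult: "\<And>g h x. \<lbrakk>g \<in> P; h \<in> P; x \<in> E\<rbrakk> \<Longrightarrow> f (g \<otimes> h) x = f g (f h x)"
  shows "[card {x \<in> E. \<forall>g \<in> P. f g x = x} = card E] (mod r)"
proof -
  have action: "group_action (G\<lparr>carrier := P\<rparr>) E (\<lambda>g. restrict (f g) E)"
    by (rule group_actionI) (simp_all add: subgroup_imp_group assms(1) closed one mult)
  have "order (G\<lparr>carrier := P\<rparr>) = r ^ k"
    using assms(2) by (simp add: order_def)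
  from group_action.card_fixed_points_cong[OF action assms(4,3) this]
  have "[card {x \<in> E. \<forall>g \<in> P. restrict (f g) E x = x} = card E] (mod r)"
    by simp
  moreover have "{x \<in> E. \<forall>g \<in> P. restrict (f g) E x = x} = {x \<in> E. \<forall>g \<in> P. f g x = x}"
    by auto
  ultimately show ?thesis
    by simp
qed

section \<open>Conjugates of a Sylow subgroup\<close>

text \<open>HOL-Algebra only has the existence part of Sylow's theorems; the congruence for the number
  of conjugates of a Sylow subgroup follows from the fixed point congruence, applied to conjugation
  and to right translation of cosets.\<close>

definition conjugates :: "('a, 'b) monoid_scheme \<Rightarrow> 'a set \<Rightarrow> 'a set set"
  where "conjugates G H = (\<lambda>g. g <#\<^bsub>G\<^esub> H #>\<^bsub>G\<^esub> inv\<^bsub>G\<^esub> g) ` carrier G"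

context group
begin

lemma conj_coset_eq_image: "g <# H #> inv g = (\<lambda>h. g \<otimes> h \<otimes> inv g) ` H"
  by (auto simp: l_coset_def r_coset_def)

lemma conj_coset_mult:
  assumes "g \<in> carrier G" and "h \<in> carrier G" and "H \<subseteq> carrier G"
  shows "(g \<otimes> h) <# H #> inv (g \<otimes> h) = g <# (h <# H #> inv h) #> inv g"
  unfolding conj_coset_eq_image image_image using assms
  by (intro image_cong refl) (auto simp: inv_mult_group m_assoc subset_iff)

lemma card_conj_coset:
  assumes "g \<in> carrier G" and "H \<subseteq> carrier G"
  shows "card (g <# H #> inv g) = card H"
  unfolding conj_coset_eq_image using assms
  by (intro card_image) (auto simp: inj_on_def subset_iff)

lemma normalizer_eq:
  "H \<subseteq> carrier G \<Longrightarrow> normalizer G H = {g \<in> carrier G. g <# H #> inv g = H}"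
  by (simp add: normalizer_def stabilizer_def)

lemma subgroup_le_normalizer: "subgroup H G \<Longrightarrow> H \<subseteq> normalizer G H"
  using subgroup_in_normalizer normal_imp_subgroup subgroup.subset by force

lemma card_rcosets_in_subgroup:
  assumes "subgroup S G" and "subgroup K G" and "S \<subseteq> K"
  shows "card ((\<lambda>g. S #> g) ` K) * card S = card K"
proof -
  interpret K: group "G\<lparr>carrier := K\<rparr>"
    using subgroup_imp_group[OF assms(2)] .
  have "rcosets\<^bsub>G\<lparr>carrier := K\<rparr>\<^esub> S = (\<lambda>g. S #> g) ` K"
    unfolding RCOSETS_def r_coset_def by auto
  then show ?thesis
    using K.lagrange[OF subgroup_incl[OF assms]] by (simp add: order_def)
qed

lemma card_subgroup_dvd:
  assumes "subgroup H G" and "subgroup K G" and "H \<subseteq> K"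
  shows "card H dvd card K"
  using card_rcosets_in_subgroup[OF assms] by (metis dvd_triv_right)

lemma card_conjugates_mult_normalizer:
  assumes "H \<subseteq> carrier G"
  shows "card (conjugates G H) * card (normalizer G H) = order G"
proof -
  interpret power_set:
    group_action G "{H. H \<subseteq> carrier G}" "\<lambda>g. \<lambda>H \<in> {H. H \<subseteq> carrier G}. g <# H #> inv g"
    by (rule action_by_conjugation_on_power_set)
  have "orbit G (\<lambda>g. \<lambda>H \<in> {H. H \<subseteq> carrier G}. g <# H #> inv g) H = conjugates G H"
    using assms by (auto simp: orbit_def conjugates_def)
  moreover have "card (orbit G (\<lambda>g. \<lambda>H \<in> {H. H \<subseteq> carrier G}. g <# H #> inv g) H)
      * card (normalizer G H) = order G"
    unfolding normalizer_def by (rule power_set.orbit_stabilizer_theorem) (simp add: assms)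
  ultimately show ?thesis
    by simp
qed

lemma card_conjugates_dvd_index:
  assumes "finite (carrier G)" and "subgroup Q G" and "order G = card Q * m"
  shows "card (conjugates G Q) dvd m"
proof -
  have "subgroup (normalizer G Q) G"
    using assms(2) normalizer_imp_subgroup subgroup.subset by blast
  then obtain t where "card (normalizer G Q) = card Q * t"
    using card_subgroup_dvd subgroup_le_normalizer assms(2) by blast
  then have "card Q * (card (conjugates G Q) * t) = card Q * m"
    using card_conjugates_mult_normalizer[OF subgroup.subset[OF assms(2)]] assms(3)
    by (simp add: ac_simps)
  then have "card (conjugates G Q) * t = m"
    using subgroup.finite_imp_card_positive[OF assms(2,1)] by simp
  then show ?thesis
    by (metis dvdI)
qed

lemma fixed_rcoset_imp_mem_conj:
  assumes "subgroup S G" and "g \<in> carrier G" and "h \<in> carrier G"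
    and "(S #> g) #> inv h = S #> g"
  shows "h \<in> inv g <# S #> inv (inv g)"
proof -
  have "g \<otimes> inv h \<in> (S #> g) #> inv h"
    using rcos_self[OF assms(2,1)] unfolding r_coset_def by blast
  then have "g \<otimes> inv h \<in> S #> g"
    by (simp only: assms(4))
  then have "g \<otimes> inv h \<otimes> inv g \<in> S"
    by (rule subgroup.rcos_module_imp[OF assms(1) is_group assms(2)])
  then have "inv (g \<otimes> inv h \<otimes> inv g) \<in> S"
    by (rule subgroup.m_inv_closed[OF assms(1)])
  moreover have "inv (g \<otimes> inv h \<otimes> inv g) = g \<otimes> h \<otimes> inv g"
    using assms(2,3) by (simp add: inv_mult_group m_assoc)
  moreover have "h = inv g \<otimes> (g \<otimes> h \<otimes> inv g) \<otimes> inv (inv g)"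
    using assms(2,3) by (simp add: m_assoc inv_solve_left)
  ultimately show ?thesis
    unfolding conj_coset_eq_image by auto
qed

lemma self_mem_conjugates: "H \<subseteq> carrier G \<Longrightarrow> H \<in> conjugates G H"
  unfolding conjugates_def by (rule image_eqI[of _ _ \<one>]) (simp_all add: lcos_mult_one)

lemma exists_rcoset_fixed_by_prime_power_subgroup:
  assumes "subgroup K G" and "finite K" and "subgroup S G" and "S \<subseteq> K"
    and "card K = card S * m" and "\<not> r dvd m"
    and "subgroup P G" and "P \<subseteq> K" and "card P = r ^ k" and "Factorial_Ring.prime r"
  shows "\<exists>g \<in> K. \<forall>h \<in> P. (S #> g) #> inv h = S #> g"
proof -
  have K_carrier: "K \<subseteq> carrier G" and S_carrier: "S \<subseteq> carrier G"
    using subgroup.subset assms(1,3) by blast+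
  define E where "E = (\<lambda>g. S #> g) ` K"
  have "card S * card E = card S * m"
    using card_rcosets_in_subgroup[OF assms(3,1,4)] assms(5) unfolding E_def by (simp add: mult.commute)
  moreover have "card S > 0"
    using subgroup.one_closed[OF assms(3)] finite_subset[OF assms(4,2)] card_gt_0_iff by blast
  ultimately have card_E: "card E = m"
    by simp
  have E_carrier: "Z \<subseteq> carrier G" if "Z \<in> E" for Z
    using that K_carrier r_coset_subset_G[OF S_carrier] unfolding E_def by blast
  have "[card {Z \<in> E. \<forall>h \<in> P. Z #> inv h = Z} = card E] (mod r)"
  proof (rule card_fixed_points_cong_subgroup[OF assms(7,9,10)])
    show "finite E"
      unfolding E_def using assms(2) by simp
    show "Z #> inv h \<in> E" if "h \<in> P" and "Z \<in> E" for h Z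
    proof -
      obtain g where g: "g \<in> K" "Z = S #> g"
        using \<open>Z \<in> E\<close> unfolding E_def by blast
      have "g \<in> carrier G" and "h \<in> carrier G"
        using g(1) \<open>h \<in> P\<close> K_carrier assms(8) by auto
      then have "Z #> inv h = S #> (g \<otimes> inv h)"
        using g(2) S_carrier by (simp add: coset_mult_assoc)
      moreover have "g \<otimes> inv h \<in> K"
        using subgroup.m_closed[OF assms(1) g(1) subgroup.m_inv_closed[OF assms(1)]] \<open>h \<in> P\<close> assms(8)
        by blast
      ultimately show ?thesis
        unfolding E_def by blast
    qed
    show "Z #> inv \<one> = Z" if "Z \<in> E" for Z
      using E_carrier[OF that] by simp
    show "Z #> inv (g \<otimes> h) = (Z #> inv h) #> inv g" if "g \<in> P" "h \<in> P" "Z \<in> E" for g h Z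
    proof -
      have "g \<in> carrier G" and "h \<in> carrier G"
        using that(1,2) K_carrier assms(8) by auto
      then show ?thesis
        using E_carrier[OF that(3)] by (simp add: coset_mult_assoc inv_mult_group)
    qed
  qed
  moreover have "\<not> [0 = card E] (mod r)"
    using card_E assms(6) by (metis cong_0_iff cong_sym)
  ultimately have "{Z \<in> E. \<forall>h \<in> P. Z #> inv h = Z} \<noteq> {}"
    by (metis card.empty)
  then show ?thesis
    unfolding E_def by blast
qed

lemma prime_power_subgroup_le_conjugate:
  assumes "subgroup K G" and "finite K" and "subgroup S G" and "S \<subseteq> K"
    and "card K = card S * m" and "\<not> r dvd m"
    and "subgroup P G" and "P \<subseteq> K" and "card P = r ^ k" and "Factorial_Ring.prime r"
  shows "\<exists>g \<in> K. P \<subseteq> g <# S #> inv g"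
proof -
  obtain g where g: "g \<in> K" and fixed: "\<forall>h \<in> P. (S #> g) #> inv h = S #> g"
    using exists_rcoset_fixed_by_prime_power_subgroup[OF assms] by blast
  have "P \<subseteq> inv g <# S #> inv (inv g)"
    using fixed_rcoset_imp_mem_conj[OF assms(3)] fixed g subgroup.subset[OF assms(1)]
      subgroup.subset[OF assms(7)] by blast
  moreover have "inv g \<in> K"
    using subgroup.m_inv_closed[OF assms(1) g] by simp
  ultimately show ?thesis
    by blast
qed

lemma sylow_subgroup_eq_if_le_normalizer:
  assumes "finite (carrier G)" and "Factorial_Ring.prime r" and "order G = r ^ k * m" and "\<not> r dvd m"
    and "subgroup Q G" and "card Q = r ^ k" and "subgroup Q' G" and "card Q' = r ^ k"
    and "Q \<subseteq> normalizer G Q'"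
  shows "Q = Q'"
proof -
  let ?N = "normalizer G Q'"
  have Q'_carrier: "Q' \<subseteq> carrier G"
    by (rule subgroup.subset[OF assms(7)])
  have N: "subgroup ?N G"
    by (rule normalizer_imp_subgroup[OF Q'_carrier])
  have "finite ?N"
    using finite_subset[OF subgroup.subset[OF N] assms(1)] .
  have "Q' \<subseteq> ?N"
    by (rule subgroup_le_normalizer[OF assms(7)])
  then obtain t where t: "card ?N = card Q' * t"
    using card_subgroup_dvd[OF assms(7) N] by blast
  obtain u where "order G = card ?N * u"
    using card_subgroup_dvd[OF N subgroup_self subgroup.subset[OF N]] by (auto simp: order_def)
  then have "m = t * u"
    using t assms(3,8) prime_gt_0_nat[OF assms(2)] by (simp add: mult.assoc)
  then have "\<not> r dvd t"
    using assms(4) by auto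
  then obtain g where "g \<in> ?N" "Q \<subseteq> g <# Q' #> inv g"
    using prime_power_subgroup_le_conjugate[OF N \<open>finite ?N\<close> assms(7) \<open>Q' \<subseteq> ?N\<close> t _ assms(5,9,6,2)]
    by blast
  then have "Q \<subseteq> Q'"
    using normalizer_eq[OF Q'_carrier] by auto
  then show ?thesis
    using card_subset_eq finite_subset[OF Q'_carrier assms(1)] assms(6,8) by metis
qed

lemma conj_coset_mem_conjugates:
  assumes "h \<in> carrier G" and "H \<subseteq> carrier G" and "Y \<in> conjugates G H"
  shows "h <# Y #> inv h \<in> conjugates G H"
proof -
  obtain g where g: "g \<in> carrier G" and Y: "Y = g <# H #> inv g"
    using assms(3) unfolding conjugates_def by blast
  have "h <# Y #> inv h = (h \<otimes> g) <# H #> inv (h \<otimes> g)"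
    unfolding Y by (rule conj_coset_mult[OF assms(1) g assms(2), symmetric])
  moreover have "h \<otimes> g \<in> carrier G"
    using assms(1) g by simp
  ultimately show ?thesis
    unfolding conjugates_def by blast
qed

lemma conjugates_subset_carrier:
  "H \<subseteq> carrier G \<Longrightarrow> Y \<in> conjugates G H \<Longrightarrow> Y \<subseteq> carrier G"
  unfolding conjugates_def conj_coset_eq_image by auto

lemma conjugates_fixed_by_sylow:
  assumes "finite (carrier G)" and "Factorial_Ring.prime r" and "order G = r ^ k * m" and "\<not> r dvd m"
    and "subgroup Q G" and "card Q = r ^ k"
  shows "{Y \<in> conjugates G Q. \<forall>h \<in> Q. h <# Y #> inv h = Y} = {Q}"
proof -
  have Q_carrier: "Q \<subseteq> carrier G"
    by (rule subgroup.subset[OF assms(5)])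
  have "Q = Y" if "Y \<in> conjugates G Q" and Y_fixed: "\<forall>h \<in> Q. h <# Y #> inv h = Y" for Y
  proof -
    obtain g where g: "g \<in> carrier G" "Y = g <# Q #> inv g"
      using \<open>Y \<in> conjugates G Q\<close> unfolding conjugates_def by blast
    have "subgroup Y G"
      using subgroup_conjugation_is_surj2[OF g(1) assms(5)] g(2) by simp
    moreover have "card Y = r ^ k"
      using card_conj_coset[OF g(1) Q_carrier] g(2) assms(6) by simp
    moreover have "Q \<subseteq> normalizer G Y"
      using Y_fixed Q_carrier normalizer_eq[OF subgroup.subset[OF \<open>subgroup Y G\<close>]] by auto
    ultimately show "Q = Y"
      by (rule sylow_subgroup_eq_if_le_normalizer[OF assms])
  qed
  moreover have "\<forall>h \<in> Q. h <# Q #> inv h = Q"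
    using subgroup_le_normalizer[OF assms(5)] normalizer_eq[OF Q_carrier] by auto
  ultimately show ?thesis
    using self_mem_conjugates[OF Q_carrier] by blast
qed

lemma card_conjugates_sylow_cong_1:
  assumes "finite (carrier G)" and "Factorial_Ring.prime r" and "order G = r ^ k * m" and "\<not> r dvd m"
    and "subgroup Q G" and "card Q = r ^ k"
  shows "[card (conjugates G Q) = 1] (mod r)"
proof -
  have Q_carrier: "Q \<subseteq> carrier G"
    by (rule subgroup.subset[OF assms(5)])
  have "[card {Y \<in> conjugates G Q. \<forall>h \<in> Q. h <# Y #> inv h = Y} = card (conjugates G Q)] (mod r)"
  proof (rule card_fixed_points_cong_subgroup[OF assms(5,6,2)])
    show "finite (conjugates G Q)"
      unfolding conjugates_def using assms(1) by simp
    show "h <# Y #> inv h \<in> conjugates G Q" if "h \<in> Q" and "Y \<in> conjugates G Q" for h Y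
      using conj_coset_mem_conjugates[OF _ Q_carrier that(2)] that(1) Q_carrier by blast
    show "\<one> <# Y #> inv \<one> = Y" if "Y \<in> conjugates G Q" for Y
      using conjugates_subset_carrier[OF Q_carrier that] by (simp add: lcos_mult_one)
    show "(g \<otimes> h) <# Y #> inv (g \<otimes> h) = g <# (h <# Y #> inv h) #> inv g"
      if "g \<in> Q" and "h \<in> Q" and "Y \<in> conjugates G Q" for g h Y
      using conj_coset_mult conjugates_subset_carrier[OF Q_carrier that(3)] that(1,2) Q_carrier by blast
  qed
  then show ?thesis
    using conjugates_fixed_by_sylow[OF assms] by (simp add: cong_sym)
qed

lemma conjugates_eq_singleton_if_index_prime_power:
  assumes "finite (carrier G)" and "Factorial_Ring.prime r" and "Factorial_Ring.prime s" and "r \<noteq> s"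
    and "order G = r ^ k * s ^ i" and "subgroup Q G" and "card Q = r ^ k"
    and "\<forall>j. 1 \<le> j \<and> j \<le> i \<longrightarrow> \<not> r dvd s ^ j - 1"
  shows "conjugates G Q = {Q}"
proof -
  have "\<not> r dvd s ^ i"
    using assms(2-4) by (metis prime_dvd_power_nat primes_dvd_imp_eq)
  have "card (conjugates G Q) dvd s ^ i"
    using card_conjugates_dvd_index[OF assms(1,6)] assms(5,7) by simp
  then obtain j where "j \<le> i" and j: "card (conjugates G Q) = s ^ j"
    using divides_primepow_nat[OF assms(3)] by blast
  have cong: "[s ^ j = 1] (mod r)"
    using card_conjugates_sylow_cong_1[OF assms(1,2,5) \<open>\<not> r dvd s ^ i\<close> assms(6,7)] j by simp
  have "j = 0"
  proof (rule ccontr)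
    assume "j \<noteq> 0"
    then have "\<not> r dvd s ^ j - 1"
      using assms(8) \<open>j \<le> i\<close> by simp
    moreover have "1 \<le> s ^ j"
      using prime_gt_0_nat[OF assms(3)] by simp
    ultimately show False
      using cong by (simp add: cong_altdef_nat)
  qed
  then have "card (conjugates G Q) = 1"
    using j by simp
  then show ?thesis
    using self_mem_conjugates[OF subgroup.subset[OF assms(6)]] by (metis card_1_singletonE singletonD)
qed

section \<open>Commuting elements of prime order\<close>

lemma exists_nontrivial_centralized:
  assumes "subgroup P G" and "card P = r ^ k" and "Factorial_Ring.prime r"
    and "subgroup Q G" and "finite Q" and "\<And>g. g \<in> P \<Longrightarrow> g <# Q #> inv g = Q"
    and "\<not> [card Q = 1] (mod r)"
  shows "\<exists>y \<in> Q. y \<noteq> \<one> \<and> (\<forall>x \<in> P. x \<otimes> y = y \<otimes> x)"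
proof -
  have P_carrier: "P \<subseteq> carrier G" and Q_carrier: "Q \<subseteq> carrier G"
    using subgroup.subset assms(1,4) by blast+
  let ?F = "{y \<in> Q. \<forall>g \<in> P. g \<otimes> y \<otimes> inv g = y}"
  have "[card ?F = card Q] (mod r)"
  proof (rule card_fixed_points_cong_subgroup[OF assms(1-3,5)])
    show "g \<otimes> y \<otimes> inv g \<in> Q" if "g \<in> P" and "y \<in> Q" for g y
      using assms(6)[OF \<open>g \<in> P\<close>] \<open>y \<in> Q\<close> unfolding conj_coset_eq_image by blast
    show "\<one> \<otimes> y \<otimes> inv \<one> = y" if "y \<in> Q" for y
      using that Q_carrier by auto
    show "g \<otimes> h \<otimes> y \<otimes> inv (g \<otimes> h) = g \<otimes> (h \<otimes> y \<otimes> inv h) \<otimes> inv g"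
      if "g \<in> P" and "h \<in> P" and "y \<in> Q" for g h y
    proof -
      have "g \<in> carrier G" "h \<in> carrier G" "y \<in> carrier G"
        using that P_carrier Q_carrier by auto
      then show ?thesis
        by (simp add: inv_mult_group m_assoc)
    qed
  qed
  then have "?F \<noteq> {\<one>}"
    using assms(7) by (auto dest: cong_sym)
  moreover have "\<one> \<in> ?F"
    using subgroup.one_closed[OF assms(4)] P_carrier by auto
  ultimately obtain y where y: "y \<in> ?F" "y \<noteq> \<one>"
    by blast
  have "x \<otimes> y = y \<otimes> x" if "x \<in> P" for x
  proof -
    have "x \<in> carrier G" and "y \<in> carrier G"
      using that y(1) P_carrier Q_carrier by auto
    then have "x \<otimes> y = x \<otimes> y \<otimes> inv x \<otimes> x"
      by (simp add: m_assoc)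
    also have "\<dots> = y \<otimes> x"
      using that y(1) by simp
    finally show ?thesis .
  qed
  with y show ?thesis
    by blast
qed

lemma ord_dvd_card_subgroup:
  assumes "subgroup H G" and "x \<in> H"
  shows "ord x dvd card H"
proof -
  have x: "x \<in> carrier G"
    by (rule subgroup.mem_carrier[OF assms])
  have "generate G {x} \<subseteq> H"
    using generate_subgroup_incl assms by simp
  then show ?thesis
    using card_subgroup_dvd[OF generate_is_subgroup assms(1)] generate_pow_card[OF x] x by simp
qed

lemma exists_pow_ord_prime:
  assumes "x \<in> carrier G" and "x \<noteq> \<one>" and "Factorial_Ring.prime r" and "ord x dvd r ^ n"
  shows "\<exists>j::nat. ord (x [^] j) = r"
proof -
  obtain a where a: "ord x = r ^ a"
    using divides_primepow_nat[OF assms(3)] assms(4) by blast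
  with assms(1,2) obtain b where b: "a = Suc b"
    by (metis ord_eq_1 power_0 not0_implies_Suc)
  have "ord (x [^] r ^ b) = ord x div r ^ b"
    using ord_pow[OF assms(1)] a b prime_gt_0_nat[OF assms(3)] by simp
  also have "\<dots> = r"
    using a b prime_gt_0_nat[OF assms(3)] by simp
  finally show ?thesis
    by blast
qed

lemma ord_mult_eq_if_coprime:
  assumes "x \<otimes> y = y \<otimes> x" and "x \<in> carrier G" and "y \<in> carrier G"
    and "coprime (ord x) (ord y)"
  shows "ord (x \<otimes> y) = ord x * ord y"
proof -
  have factor: "ord u dvd ord (u \<otimes> v)"
    if "u \<otimes> v = v \<otimes> u" "u \<in> carrier G" "v \<in> carrier G" "coprime (ord u) (ord v)" for u v
  proof -
    let ?n = "ord (u \<otimes> v) * ord v"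
    have "(u \<otimes> v) [^] ?n = \<one>"
      using that(2,3) by (simp add: pow_eq_id)
    then have "u [^] ?n \<otimes> v [^] ?n = \<one>"
      by (simp add: pow_mult_distrib[OF that(1-3)])
    moreover have "v [^] ?n = \<one>"
      using that(3) pow_eq_id by simp
    ultimately have "ord u dvd ?n"
      using that(2) pow_eq_id by simp
    then show ?thesis
      using that(4) by (simp add: coprime_dvd_mult_left_iff)
  qed
  have "ord x dvd ord (x \<otimes> y)" and "ord y dvd ord (x \<otimes> y)"
    using factor[of x y] factor[of y x] assms by (simp_all add: coprime_commute)
  then have "ord x * ord y dvd ord (x \<otimes> y)"
    using assms(4) by (simp add: divides_mult)
  then show ?thesis
    using ord_mul_divides[OF assms(1-3)] by (simp add: dvd_antisym)
qed

lemma exists_comm_subgroup_card_ord: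
  assumes "x \<in> carrier G"
  shows "\<exists>H. subgroup H G \<and> card H = ord x \<and> comm_group (G\<lparr>carrier := H\<rparr>)"
proof (intro exI conjI)
  show "subgroup (generate G {x}) G"
    using generate_is_subgroup assms by simp
  show "card (generate G {x}) = ord x"
    using generate_pow_card[OF assms] by simp
  have "comm_group (subgroup_generated G {x})"
    by (rule group.cyclic_imp_abelian_group[OF group_subgroup_generated cyclic_group_generated])
  then show "comm_group (G\<lparr>carrier := generate G {x}\<rparr>)"
    using assms by (simp add: subgroup_generated_def)
qed

lemma exists_comm_subgroup_card_prime_mult:
  assumes "x \<in> carrier G" and "x \<noteq> \<one>" and "ord x dvd p ^ a" and "Factorial_Ring.prime p"
    and "y \<in> carrier G" and "y \<noteq> \<one>" and "ord y dvd q ^ b" and "Factorial_Ring.prime q"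
    and "p \<noteq> q" and "x \<otimes> y = y \<otimes> x"
  shows "\<exists>H. subgroup H G \<and> card H = p * q \<and> comm_group (G\<lparr>carrier := H\<rparr>)"
proof -
  obtain j l :: nat where j: "ord (x [^] j) = p" and l: "ord (y [^] l) = q"
    using exists_pow_ord_prime[OF assms(1,2,4,3)] exists_pow_ord_prime[OF assms(5,6,8,7)] by blast
  have "x [^] j \<otimes> y [^] l = y [^] l \<otimes> x [^] j"
    using assms(1,5,10) by (metis group_commutes_pow nat_pow_closed)
  then have "ord (x [^] j \<otimes> y [^] l) = ord (x [^] j) * ord (y [^] l)"
    by (rule ord_mult_eq_if_coprime) (simp_all add: assms(1,4,5,8,9) j l primes_coprime)
  then show ?thesis
    using exists_comm_subgroup_card_ord[of "x [^] j \<otimes> y [^] l"] assms(1,5) j l by auto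
qed

end

theorem theorem2p9:
  fixes G (structure)
    and p q m n i :: nat
  assumes "group G"
    and "finite (carrier G)"
    and "Factorial_Ring.prime p" and "Factorial_Ring.prime q" and "p \<noteq> q"
    and "p dvd order G" and "q dvd order G"
    and "m > 0" and "n > 0"
    and "1 \<le> i" and "i \<le> m"
    and "order G = p ^ i * q ^ n"
    and "\<not> p dvd (q ^ n - 1)"
    and "\<forall>j. 1 \<le> j \<and> j \<le> m \<longrightarrow> \<not> q dvd (p ^ j - 1)"
  shows "\<exists>H. subgroup H G \<and> card H = p * q \<and> comm_group (G\<lparr>carrier := H\<rparr>)"
proof -
  interpret group G
    by fact
  obtain P where P: "subgroup P G" "card P = p ^ 1"
    using sylow_thm[of p G 1 "p ^ (i - 1) * q ^ n"] assms(1-3,10,12)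
    by (auto simp: mult.assoc[symmetric] power_Suc[symmetric] simp del: power_Suc)
  obtain Q where Q: "subgroup Q G" "card Q = q ^ n"
    using sylow_thm[of q G n "p ^ i"] assms(1,2,4,12) by (auto simp: mult.commute)
  have "order G = q ^ n * p ^ i"
    using assms(12) by (simp add: mult.commute)
  moreover have "\<forall>j. 1 \<le> j \<and> j \<le> i \<longrightarrow> \<not> q dvd p ^ j - 1"
    using assms(11,14) by auto
  ultimately have "conjugates G Q = {Q}"
    by (rule conjugates_eq_singleton_if_index_prime_power[OF assms(2,4,3) assms(5)[symmetric] _ Q])
  then have Q_normal: "g <# Q #> inv g = Q" if "g \<in> P" for g
    using subgroup.mem_carrier[OF P(1) that] unfolding conjugates_def by blast
  have "1 \<le> q ^ n"
    using prime_gt_0_nat[OF assms(4)] by simp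
  then have "\<not> [card Q = 1] (mod p)"
    using assms(13) Q(2) by (simp add: cong_altdef_nat)
  then obtain y where y: "y \<in> Q" "y \<noteq> \<one>" "\<forall>x \<in> P. x \<otimes> y = y \<otimes> x"
    using exists_nontrivial_centralized[OF P assms(3) Q(1) _ Q_normal]
      finite_subset[OF subgroup.subset[OF Q(1)] assms(2)] by blast
  have "P \<noteq> {\<one>}"
    using P(2) prime_gt_1_nat[OF assms(3)] by auto
  then obtain x where x: "x \<in> P" "x \<noteq> \<one>"
    using subgroup.one_closed[OF P(1)] by blast
  show ?thesis
    using exists_comm_subgroup_card_prime_mult[OF subgroup.mem_carrier[OF P(1) x(1)] x(2)
        ord_dvd_card_subgroup[OF P(1) x(1), unfolded P(2)] assms(3)
        subgroup.mem_carrier[OF Q(1) y(1)] y(2) ord_dvd_card_subgroup[OF Q(1) y(1), unfolded Q(2)]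
        assms(4,5)] x(1) y(3) by blast
qed

end
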